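(* Let $G$ be a finite, simple, undirected, connected graph. A vertex $v\in V(G)$ is an $\mathcal{L}$-branch leaf of some DFS ordering of $G$ if and only if $v$ is the end-vertex (last vertex) of some DFS ordering of $G$.
   Context: A vertex ordering of $G$ is a bijection $\sigma:\{1,\dots,n\}\to V(G)$; $u\prec_\sigma w$ means $u$ comes before $w$. Depth First Search (DFS) orderings are produced by the label search: initially all labels are $\emptyset$; for $i=1,\dots,n$ choose any unnumbered vertex $x$ such that there is no unnumbered $y$ with $\mathrm{label}(x)\prec\mathrm{label}(y)$, set $\sigma(i)=x$, and add $i$ to the labels of the unnumbered neighbors of $x$, where $A\prec B$ iff ($A=\emptyset$ and $B\neq\emptyset$) or $\max(A)<\max(B)$. The $\mathcal{L}$-tree of $\sigma$ is the spanning tree containing, for each $v\neq\sigma(1)$, the edge from $v$ to its rightmost neighbor $w$ with $w\prec_\sigma v$. A vertex $v\neq\sigma(1)$ is an $\mathcal{L}$-branch leaf of $\sigma$ if it is a leaf of the $\mathcal{L}$-tree of $\sigma$. *)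

theory Defs
  imports Main
begin

definition simple_graph :: "'a set \<Rightarrow> ('a \<Rightarrow> 'a \<Rightarrow> bool) \<Rightarrow> bool" where
  "simple_graph V E \<longleftrightarrow> finite V \<and> (\<forall>x y. E x y \<longrightarrow> x \<in> V \<and> y \<in> V)
     \<and> (\<forall>x y. E x y \<longrightarrow> E y x) \<and> (\<forall>x. \<not> E x x)"

definition connected_graph :: "'a set \<Rightarrow> ('a \<Rightarrow> 'a \<Rightarrow> bool) \<Rightarrow> bool" where
  "connected_graph V E \<longleftrightarrow> V \<noteq> {} \<and> (\<forall>x\<in>V. \<forall>y\<in>V. E\<^sup>*\<^sup>* x y)"

definition vertex_ordering :: "'a set \<Rightarrow> (nat \<Rightarrow> 'a) \<Rightarrow> bool" where
  "vertex_ordering V \<sigma> \<longleftrightarrow> bij_betw \<sigma> {1..card V} V"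

definition label_less :: "nat set \<Rightarrow> nat set \<Rightarrow> bool" where
  "label_less A B \<longleftrightarrow> (A = {} \<and> B \<noteq> {}) \<or> (A \<noteq> {} \<and> B \<noteq> {} \<and> Max A < Max B)"

definition dfs_label :: "('a \<Rightarrow> 'a \<Rightarrow> bool) \<Rightarrow> (nat \<Rightarrow> 'a) \<Rightarrow> nat \<Rightarrow> 'a \<Rightarrow> nat set" where
  "dfs_label E \<sigma> i x = {j \<in> {1..<i}. E (\<sigma> j) x}"

definition dfs_ordering :: "'a set \<Rightarrow> ('a \<Rightarrow> 'a \<Rightarrow> bool) \<Rightarrow> (nat \<Rightarrow> 'a) \<Rightarrow> bool" where
  "dfs_ordering V E \<sigma> \<longleftrightarrow> vertex_ordering V \<sigma> \<and>
     (\<forall>i\<in>{1..card V}. \<forall>k\<in>{i..card V}.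
        \<not> label_less (dfs_label E \<sigma> i (\<sigma> i)) (dfs_label E \<sigma> i (\<sigma> k)))"

definition pos :: "'a set \<Rightarrow> (nat \<Rightarrow> 'a) \<Rightarrow> 'a \<Rightarrow> nat" where
  "pos V \<sigma> v = inv_into {1..card V} \<sigma> v"

definition L_parent :: "'a set \<Rightarrow> ('a \<Rightarrow> 'a \<Rightarrow> bool) \<Rightarrow> (nat \<Rightarrow> 'a) \<Rightarrow> 'a \<Rightarrow> 'a \<Rightarrow> bool" where
  "L_parent V E \<sigma> v w \<longleftrightarrow> E v w \<and> pos V \<sigma> w < pos V \<sigma> v \<and>
     (\<forall>u. E v u \<and> pos V \<sigma> u < pos V \<sigma> v \<longrightarrow> pos V \<sigma> u \<le> pos V \<sigma> w)"

definition L_tree_edges :: "'a set \<Rightarrow> ('a \<Rightarrow> 'a \<Rightarrow> bool) \<Rightarrow> (nat \<Rightarrow> 'a) \<Rightarrow> 'a set set" where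
  "L_tree_edges V E \<sigma> = {{v, w} | v w. v \<in> V \<and> v \<noteq> \<sigma> 1 \<and> L_parent V E \<sigma> v w}"

definition L_branch_leaf :: "'a set \<Rightarrow> ('a \<Rightarrow> 'a \<Rightarrow> bool) \<Rightarrow> (nat \<Rightarrow> 'a) \<Rightarrow> 'a \<Rightarrow> bool" where
  "L_branch_leaf V E \<sigma> v \<longleftrightarrow> v \<in> V \<and> v \<noteq> \<sigma> 1 \<and>
     card {w. {v, w} \<in> L_tree_edges V E \<sigma>} = 1"

end

theory Submission
  imports Defs
begin

(* Write r = pos V sigma for the position function of an ordering. DFS orderings are exactly the
   orderings satisfying the four-point condition: if r x < r y < r z and xz is an edge, then y has
   a neighbour w with r x <= r w < r y. The last vertex of a DFS ordering has an L-parent and no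
   L-children, so it is an L-branch leaf. Conversely, an L-branch leaf v has no neighbour to its
   right, for otherwise the four-point condition makes the successor of v an L-child of v.
   Such a v can be moved towards the end. Let y be the successor of v and x the L-parent of y.
   The block B of vertices strictly between x and y, which ends with v, has no edges to y or beyond;
   the maximal block C starting at y in which every vertex has an earlier neighbour in {x} or C
   has no edges beyond C. Exchanging B and C yields a DFS ordering in which v, still without
   neighbours to its right, has moved behind C. Iterating, v becomes the last vertex. *)

(* The four-point condition of Corneil and Krueger, stated for the position function r. *)
definition dfs_rank :: "'a set \<Rightarrow> ('a \<Rightarrow> 'a \<Rightarrow> bool) \<Rightarrow> ('a \<Rightarrow> nat) \<Rightarrow> bool" where
  "dfs_rank V E r \<longleftrightarrow> bij_betw r V {1..card V} \<and>
     (\<forall>x\<in>V. \<forall>y\<in>V. \<forall>z\<in>V. r x < r y \<longrightarrow> r y < r z \<longrightarrow> E x z \<longrightarrow>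
        (\<exists>w\<in>V. r x \<le> r w \<and> r w < r y \<and> E w y))"

lemma dfs_rankD:
  assumes "dfs_rank V E r" "x \<in> V" "y \<in> V" "z \<in> V" "r x < r y" "r y < r z" "E x z"
  shows "\<exists>w\<in>V. r x \<le> r w \<and> r w < r y \<and> E w y"
  using assms unfolding dfs_rank_def by blast

lemma dfs_rank_bij: "dfs_rank V E r \<Longrightarrow> bij_betw r V {1..card V}"
  unfolding dfs_rank_def by blast

lemma dfs_rank_inj: "dfs_rank V E r \<Longrightarrow> x \<in> V \<Longrightarrow> y \<in> V \<Longrightarrow> r x = r y \<Longrightarrow> x = y"
  unfolding dfs_rank_def bij_betw_def inj_on_def by blast

lemma dfs_rank_vertex_of_rank:
  assumes "dfs_rank V E r" "1 \<le> k" "k \<le> card V"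
  obtains y where "y \<in> V" "r y = k"
  using assms bij_betw_imp_surj_on[OF dfs_rank_bij[OF assms(1)]] by (metis atLeastAtMost_iff imageE)

lemma dfs_rank_range: "dfs_rank V E r \<Longrightarrow> x \<in> V \<Longrightarrow> 1 \<le> r x \<and> r x \<le> card V"
  using bij_betw_apply[OF dfs_rank_bij] by fastforce

lemma bij_betw_pos: "vertex_ordering V \<sigma> \<Longrightarrow> bij_betw (pos V \<sigma>) V {1..card V}"
  unfolding vertex_ordering_def pos_def by (rule bij_betw_inv_into)

lemma pos_apply: "vertex_ordering V \<sigma> \<Longrightarrow> i \<in> {1..card V} \<Longrightarrow> pos V \<sigma> (\<sigma> i) = i"
  unfolding vertex_ordering_def pos_def bij_betw_def by simp

lemma vertex_ordering_apply: "vertex_ordering V \<sigma> \<Longrightarrow> i \<in> {1..card V} \<Longrightarrow> \<sigma> i \<in> V"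
  unfolding vertex_ordering_def by (rule bij_betw_apply)

lemma apply_pos: "vertex_ordering V \<sigma> \<Longrightarrow> x \<in> V \<Longrightarrow> \<sigma> (pos V \<sigma> x) = x"
  unfolding vertex_ordering_def pos_def bij_betw_def by (simp add: f_inv_into_f)

lemma dfs_ordering_vertex_ordering: "dfs_ordering V E \<sigma> \<Longrightarrow> vertex_ordering V \<sigma>"
  unfolding dfs_ordering_def by blast

lemma dfs_rank_pos:
  assumes dfs: "dfs_ordering V E \<sigma>"
  shows "dfs_rank V E (pos V \<sigma>)"
  unfolding dfs_rank_def
proof (intro conjI ballI impI bij_betw_pos)
  let ?r = "pos V \<sigma>"
  have ord: "vertex_ordering V \<sigma>" by (rule dfs_ordering_vertex_ordering[OF dfs])
  then show "vertex_ordering V \<sigma>" .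
  have rV: "?r u \<in> {1..card V}" if "u \<in> V" for u
    using bij_betw_apply[OF bij_betw_pos[OF ord] that] .
  fix x y z assume xyz: "x \<in> V" "y \<in> V" "z \<in> V" "?r x < ?r y" "?r y < ?r z" and "E x z"
  define Ly Lz where "Ly = dfs_label E \<sigma> (?r y) y" and "Lz = dfs_label E \<sigma> (?r y) z"
  have "\<not> label_less Ly Lz"
    using dfs rV[of y] rV[of z] xyz apply_pos[OF ord]
    unfolding dfs_ordering_def Ly_def Lz_def by (metis atLeastAtMost_iff less_imp_le_nat)
  moreover have "?r x \<in> Lz"
    using rV[of x] xyz \<open>E x z\<close> apply_pos[OF ord] unfolding Lz_def dfs_label_def by auto
  moreover have "finite Ly" "finite Lz" unfolding Ly_def Lz_def dfs_label_def by auto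
  ultimately have "Ly \<noteq> {}" "Max Lz \<le> Max Ly" "?r x \<le> Max Lz"
    unfolding label_less_def by auto
  then have "Max Ly \<in> Ly" "?r x \<le> Max Ly" using \<open>finite Ly\<close> by auto
  then obtain l where l: "l \<in> {1..<?r y}" "E (\<sigma> l) y" "?r x \<le> l"
    unfolding Ly_def dfs_label_def by auto
  have "l \<in> {1..card V}" using l rV[OF \<open>y \<in> V\<close>] by auto
  with l show "\<exists>w\<in>V. ?r x \<le> ?r w \<and> ?r w < ?r y \<and> E w y"
    by (intro bexI[of _ "\<sigma> l"]) (auto simp: pos_apply[OF ord] vertex_ordering_apply[OF ord])
qed

lemma dfs_ordering_if_dfs_rank_pos:
  assumes ord: "vertex_ordering V \<sigma>" and rank: "dfs_rank V E (pos V \<sigma>)"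
  shows "dfs_ordering V E \<sigma>"
  unfolding dfs_ordering_def
proof (intro conjI ballI notI ord)
  let ?r = "pos V \<sigma>"
  fix i k assume i: "i \<in> {1..card V}" and k: "k \<in> {i..card V}"
  define Li Lk where "Li = dfs_label E \<sigma> i (\<sigma> i)" and "Lk = dfs_label E \<sigma> i (\<sigma> k)"
  assume "label_less (dfs_label E \<sigma> i (\<sigma> i)) (dfs_label E \<sigma> i (\<sigma> k))"
  then have less: "label_less Li Lk" unfolding Li_def Lk_def .
  have fin: "finite Li" "finite Lk" unfolding Li_def Lk_def dfs_label_def by auto
  have "k \<noteq> i" using less unfolding Li_def Lk_def label_less_def by auto
  have "Lk \<noteq> {}" using less unfolding label_less_def by auto
  then have "Max Lk \<in> Lk" using fin by simp
  then have x: "Max Lk \<in> {1..<i}" "E (\<sigma> (Max Lk)) (\<sigma> k)" unfolding Lk_def dfs_label_def by auto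
  have "?r (\<sigma> (Max Lk)) = Max Lk" "?r (\<sigma> i) = i" "?r (\<sigma> k) = k"
    using pos_apply[OF ord] i k x by auto
  then obtain w where w: "w \<in> V" "Max Lk \<le> ?r w" "?r w < i" "E w (\<sigma> i)"
    using dfs_rankD[OF rank, of "\<sigma> (Max Lk)" "\<sigma> i" "\<sigma> k"] vertex_ordering_apply[OF ord] i k x \<open>k \<noteq> i\<close>
    by auto
  have "?r w \<in> Li"
    using w bij_betw_apply[OF bij_betw_pos[OF ord] \<open>w \<in> V\<close>]
    unfolding Li_def dfs_label_def by (auto simp: apply_pos[OF ord])
  then have "Max Lk \<le> Max Li" using fin w by (auto intro: le_trans[OF _ Max_ge])
  with less \<open>?r w \<in> Li\<close> show False unfolding label_less_def by auto
qed

lemma dfs_rank_cong: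
  assumes "dfs_rank V E r" "\<And>x. x \<in> V \<Longrightarrow> r' x = r x"
  shows "dfs_rank V E r'"
  using assms bij_betw_cong[of V r' r] unfolding dfs_rank_def by simp

lemma dfs_ordering_inv_into:
  assumes rank: "dfs_rank V E r"
  shows "dfs_ordering V E (inv_into V r)"
proof -
  have ord: "vertex_ordering V (inv_into V r)"
    unfolding vertex_ordering_def by (rule bij_betw_inv_into[OF dfs_rank_bij[OF rank]])
  have "pos V (inv_into V r) x = r x" if "x \<in> V" for x
    unfolding pos_def by (rule inv_into_inv_into_eq[OF dfs_rank_bij[OF rank] that])
  then have "dfs_rank V E (pos V (inv_into V r))" by (rule dfs_rank_cong[OF rank])
  then show ?thesis by (rule dfs_ordering_if_dfs_rank_pos[OF ord])
qed

lemma dfs_rankD_le: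
  assumes rank: "dfs_rank V E r" and "x \<in> V" "y \<in> V" "z \<in> V" "r x < r y" "r y \<le> r z" "E x z"
  shows "\<exists>w\<in>V. r x \<le> r w \<and> r w < r y \<and> E w y"
proof (cases "r y = r z")
  case True
  then have "y = z" using dfs_rank_inj[OF rank] assms(3,4) by blast
  then show ?thesis using assms by blast
next
  case False
  then show ?thesis using dfs_rankD[OF assms(1-5)] assms(6,7) by simp
qed

lemma dfs_rank_earlier_neighbour:
  assumes sg: "simple_graph V E" and conn: "connected_graph V E" and rank: "dfs_rank V E r"
    and y: "y \<in> V" "1 < r y"
  shows "\<exists>w\<in>V. r w < r y \<and> E w y"
proof (rule ccontr)
  (* Otherwise no edge leaves the set of vertices before y, contradicting connectivity. *)
  assume none: "\<not> (\<exists>w\<in>V. r w < r y \<and> E w y)"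
  define S where "S = {u \<in> V. r u < r y}"
  have closed: "c \<in> S" if "u \<in> S" "E u c" for u c
  proof -
    have "c \<in> V" using sg \<open>E u c\<close> unfolding simple_graph_def by blast
    show "c \<in> S"
    proof (rule ccontr)
      assume "c \<notin> S"
      then show False
        using dfs_rankD_le[OF rank, of u y c] none that \<open>c \<in> V\<close> y unfolding S_def by auto
    qed
  qed
  have "1 \<le> card V" using dfs_rank_range[OF rank y(1)] by simp
  then obtain x where x: "x \<in> V" "r x = 1" by (rule dfs_rank_vertex_of_rank[OF rank le_refl])
  have "u \<in> S" if "E\<^sup>*\<^sup>* x u" for u
    using that
  proof (induction rule: rtranclp_induct)
    case base
    show ?case using x y unfolding S_def by simp
  next
    case (step u c)
    then show ?case using closed by blast
  qed
  moreover have "E\<^sup>*\<^sup>* x y" using conn x y unfolding connected_graph_def by blast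
  ultimately have "y \<in> S" by blast
  then show False unfolding S_def by simp
qed

lemma dfs_rank_latest_earlier_neighbour:
  assumes sg: "simple_graph V E" and conn: "connected_graph V E" and rank: "dfs_rank V E r"
    and y: "y \<in> V" "1 < r y"
  obtains x where "x \<in> V" "E x y" "r x < r y" "\<And>u. u \<in> V \<Longrightarrow> E u y \<Longrightarrow> r u < r y \<Longrightarrow> r u \<le> r x"
proof -
  obtain w where "w \<in> V" "E w y" "r w < r y" using dfs_rank_earlier_neighbour[OF assms] by blast
  then obtain x where "x \<in> V \<and> E x y \<and> r x < r y"
    "\<forall>u. u \<in> V \<and> E u y \<and> r u < r y \<longrightarrow> r u \<le> r x"
    using ex_has_greatest_nat[of "\<lambda>x. x \<in> V \<and> E x y \<and> r x < r y" w r "r y"] by blast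
  then show ?thesis using that by blast
qed

lemma dfs_rank_no_edge_across_parent:
  assumes sg: "simple_graph V E" and rank: "dfs_rank V E r"
    and xy: "x \<in> V" "y \<in> V" "r x < r y"
    and latest: "\<And>u. u \<in> V \<Longrightarrow> E u y \<Longrightarrow> r u < r y \<Longrightarrow> r u \<le> r x"
    and ab: "E a b" "r x < r a" "r a < r y"
  shows "r b < r y"
proof (rule ccontr)
  assume "\<not> r b < r y"
  moreover have "a \<in> V" "b \<in> V" using sg ab unfolding simple_graph_def by auto
  ultimately obtain w where "w \<in> V" "r a \<le> r w" "r w < r y" "E w y"
    using dfs_rankD_le[OF rank, of a y b] xy ab by auto
  then show False using latest[of w] ab by auto
qed

lemma L_parent_exists:
  assumes sg: "simple_graph V E" and conn: "connected_graph V E" and dfs: "dfs_ordering V E \<sigma>"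
    and v: "v \<in> V" "v \<noteq> \<sigma> 1"
  obtains w where "L_parent V E \<sigma> v w"
proof -
  let ?r = "pos V \<sigma>"
  have ord: "vertex_ordering V \<sigma>" by (rule dfs_ordering_vertex_ordering[OF dfs])
  have rank: "dfs_rank V E ?r" by (rule dfs_rank_pos[OF dfs])
  have "?r v \<in> {1..card V}" using bij_betw_apply[OF bij_betw_pos[OF ord] v(1)] .
  moreover have "?r v \<noteq> 1" using apply_pos[OF ord v(1)] v(2) by metis
  ultimately have "1 < ?r v" by simp
  then obtain w where w: "w \<in> V" "E w v" "?r w < ?r v"
    and latest: "\<And>u. u \<in> V \<Longrightarrow> E u v \<Longrightarrow> ?r u < ?r v \<Longrightarrow> ?r u \<le> ?r w"
    using dfs_rank_latest_earlier_neighbour[OF sg conn rank v(1)] by blast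
  have "L_parent V E \<sigma> v w"
    unfolding L_parent_def using sg w latest unfolding simple_graph_def by blast
  then show ?thesis by (rule that)
qed

lemma L_parent_unique:
  assumes sg: "simple_graph V E" and ord: "vertex_ordering V \<sigma>"
    and "L_parent V E \<sigma> v w" "L_parent V E \<sigma> v w'"
  shows "w = w'"
proof -
  have "w \<in> V" "w' \<in> V" using sg assms(3,4) unfolding simple_graph_def L_parent_def by blast+
  moreover have "pos V \<sigma> w = pos V \<sigma> w'" using assms(3,4) unfolding L_parent_def by (meson le_antisym)
  ultimately show ?thesis using apply_pos[OF ord] by metis
qed

lemma L_tree_edge_iff:
  "{v, w} \<in> L_tree_edges V E \<sigma> \<longleftrightarrow>
     (v \<in> V \<and> v \<noteq> \<sigma> 1 \<and> L_parent V E \<sigma> v w) \<or> (w \<in> V \<and> w \<noteq> \<sigma> 1 \<and> L_parent V E \<sigma> w v)"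
  unfolding L_tree_edges_def by (auto simp: doubleton_eq_iff)

lemma last_vertex_L_branch_leaf:
  assumes sg: "simple_graph V E" and conn: "connected_graph V E" and dfs: "dfs_ordering V E \<sigma>"
    and n: "card V \<ge> 2"
  shows "L_branch_leaf V E \<sigma> (\<sigma> (card V))"
proof -
  let ?v = "\<sigma> (card V)"
  have ord: "vertex_ordering V \<sigma>" by (rule dfs_ordering_vertex_ordering[OF dfs])
  have v: "?v \<in> V" using vertex_ordering_apply[OF ord] n by simp
  have pos_v: "pos V \<sigma> ?v = card V" using pos_apply[OF ord] n by simp
  have "?v \<noteq> \<sigma> 1" using pos_apply[OF ord, of 1] pos_v n by auto
  then obtain w where w: "L_parent V E \<sigma> ?v w" using L_parent_exists[OF sg conn dfs v] by blast
  have no_child: "\<not> L_parent V E \<sigma> u ?v" if "u \<in> V" for u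
    using bij_betw_apply[OF bij_betw_pos[OF ord] that] pos_v unfolding L_parent_def by auto
  have "{u. {?v, u} \<in> L_tree_edges V E \<sigma>} = {w}"
  proof (intro set_eqI iffI)
    fix u assume "u \<in> {u. {?v, u} \<in> L_tree_edges V E \<sigma>}"
    then have "L_parent V E \<sigma> ?v u" using no_child[of u] by (auto simp: L_tree_edge_iff)
    then show "u \<in> {w}" using L_parent_unique[OF sg ord w] by simp
  next
    fix u assume "u \<in> {w}"
    then show "u \<in> {u. {?v, u} \<in> L_tree_edges V E \<sigma>}"
      using w v \<open>?v \<noteq> \<sigma> 1\<close> by (simp add: L_tree_edge_iff)
  qed
  then show ?thesis unfolding L_branch_leaf_def using v \<open>?v \<noteq> \<sigma> 1\<close> by simp
qed

lemma L_parent_successor: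
  assumes sg: "simple_graph V E" and dfs: "dfs_ordering V E \<sigma>"
    and "E v u" and later: "pos V \<sigma> v < pos V \<sigma> u"
  shows "L_parent V E \<sigma> (\<sigma> (pos V \<sigma> v + 1)) v"
proof -
  let ?r = "pos V \<sigma>" and ?y = "\<sigma> (pos V \<sigma> v + 1)"
  have ord: "vertex_ordering V \<sigma>" by (rule dfs_ordering_vertex_ordering[OF dfs])
  have uv: "u \<in> V" "v \<in> V" using sg \<open>E v u\<close> unfolding simple_graph_def by auto
  have "?r v + 1 \<in> {1..card V}" using later bij_betw_apply[OF bij_betw_pos[OF ord] uv(1)] by simp
  then have ry: "?r ?y = ?r v + 1" and y: "?y \<in> V"
    using pos_apply[OF ord] vertex_ordering_apply[OF ord] by auto
  obtain w where "w \<in> V" "?r v \<le> ?r w" "?r w < ?r ?y" "E w ?y"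
    using dfs_rankD_le[OF dfs_rank_pos[OF dfs] uv(2) y uv(1)] ry later \<open>E v u\<close> by auto
  moreover from this have "?r w = ?r v" using ry by simp
  ultimately have "E v ?y" using apply_pos[OF ord] uv(2) by metis
  then show ?thesis using sg ry unfolding L_parent_def simple_graph_def by auto
qed

lemma L_branch_leaf_unique_edge:
  assumes "L_branch_leaf V E \<sigma> v" "{v, x} \<in> L_tree_edges V E \<sigma>" "{v, y} \<in> L_tree_edges V E \<sigma>"
  shows "x = y"
proof -
  have "card {w. {v, w} \<in> L_tree_edges V E \<sigma>} = 1" using assms(1) unfolding L_branch_leaf_def by simp
  then obtain z where "{w. {v, w} \<in> L_tree_edges V E \<sigma>} = {z}" by (rule card_1_singletonE)
  then show ?thesis using assms(2,3) by (metis mem_Collect_eq singletonD)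
qed

lemma L_branch_leaf_no_later_neighbour:
  assumes sg: "simple_graph V E" and conn: "connected_graph V E" and dfs: "dfs_ordering V E \<sigma>"
    and leaf: "L_branch_leaf V E \<sigma> v" and "E v u"
  shows "pos V \<sigma> u < pos V \<sigma> v"
proof (rule ccontr)
  let ?r = "pos V \<sigma>" and ?y = "\<sigma> (pos V \<sigma> v + 1)"
  have ord: "vertex_ordering V \<sigma>" by (rule dfs_ordering_vertex_ordering[OF dfs])
  have v: "v \<in> V" "v \<noteq> \<sigma> 1" using leaf unfolding L_branch_leaf_def by auto
  have u: "u \<in> V" "u \<noteq> v" using sg \<open>E v u\<close> unfolding simple_graph_def by auto
  assume "\<not> ?r u < ?r v"
  moreover have "?r u \<noteq> ?r v" using u v apply_pos[OF ord] by metis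
  ultimately have later: "?r v < ?r u" by simp
  have child: "L_parent V E \<sigma> ?y v" by (rule L_parent_successor[OF sg dfs \<open>E v u\<close> later])
  have "?r v + 1 \<in> {1..card V}" "1 \<in> {1..card V}"
    using later bij_betw_apply[OF bij_betw_pos[OF ord] u(1)] by auto
  then have y: "?y \<in> V" "?r ?y = ?r v + 1" "?r (\<sigma> 1) = 1"
    using pos_apply[OF ord] vertex_ordering_apply[OF ord] by auto
  have "1 \<le> ?r v" using bij_betw_apply[OF bij_betw_pos[OF ord] v(1)] by simp
  then have "?y \<noteq> \<sigma> 1" using y(2,3) by auto
  then have "{v, ?y} \<in> L_tree_edges V E \<sigma>" using child y(1) by (simp add: L_tree_edge_iff)
  obtain x where parent: "L_parent V E \<sigma> v x" using L_parent_exists[OF sg conn dfs v] .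
  then have "{v, x} \<in> L_tree_edges V E \<sigma>" using v by (simp add: L_tree_edge_iff)
  moreover have "x \<noteq> ?y" using parent y(2) unfolding L_parent_def by auto
  ultimately show False
    using L_branch_leaf_unique_edge[OF leaf _ \<open>{v, ?y} \<in> L_tree_edges V E \<sigma>\<close>] by blast
qed

definition swap_blocks :: "nat \<Rightarrow> nat \<Rightarrow> nat \<Rightarrow> nat \<Rightarrow> nat" where
  "swap_blocks s p t i =
     (if s < i \<and> i \<le> p then i + (t - p) else if p < i \<and> i \<le> t then i - (p - s) else i)"

lemma swap_blocks_less_iff:
  assumes "s \<le> p" "p \<le> t"
  shows "swap_blocks s p t i < swap_blocks s p t j \<longleftrightarrow>
    (i < j \<and> \<not> (s < i \<and> i \<le> p \<and> p < j \<and> j \<le> t)) \<or> (s < j \<and> j \<le> p \<and> p < i \<and> i \<le> t)"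
  using assms unfolding swap_blocks_def by (simp split: if_split; arith)

lemma bij_betw_swap_blocks:
  assumes "s \<le> p" "p \<le> t" "t \<le> n"
  shows "bij_betw (swap_blocks s p t) {1..n} {1..n}"
proof -
  have inj: "inj_on (swap_blocks s p t) {1..n}"
  proof (rule inj_onI)
    fix i j assume "swap_blocks s p t i = swap_blocks s p t j"
    then show "i = j"
      using swap_blocks_less_iff[OF assms(1,2), of i j] swap_blocks_less_iff[OF assms(1,2), of j i]
      by (cases i j rule: linorder_cases) auto
  qed
  have "swap_blocks s p t ` {1..n} \<subseteq> {1..n}"
  proof (rule image_subsetI)
    fix i assume "i \<in> {1..n}"
    then show "swap_blocks s p t i \<in> {1..n}"
      using assms unfolding swap_blocks_def by (simp split: if_split; linarith)
  qed
  then have "swap_blocks s p t ` {1..n} = {1..n}" by (rule endo_inj_surj[OF finite_atLeastAtMost _ inj])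
  then show ?thesis using inj unfolding bij_betw_def by blast
qed

lemma dfs_rank_swap_blocks:
  assumes rank: "dfs_rank V E r" and sym: "\<And>a b. E a b \<Longrightarrow> E b a"
    and spt: "s \<le> p" "p \<le> t" "t \<le> card V"
    and B_sep: "\<And>a b. E a b \<Longrightarrow> s < r a \<Longrightarrow> r a \<le> p \<Longrightarrow> r b \<le> p"
    and C_sep: "\<And>a b. E a b \<Longrightarrow> p < r a \<Longrightarrow> r a \<le> t \<Longrightarrow> r b \<le> t"
    and C_attached: "\<And>y. y \<in> V \<Longrightarrow> p < r y \<Longrightarrow> r y \<le> t \<Longrightarrow>
      \<exists>w\<in>V. E w y \<and> (r w = s \<or> p < r w) \<and> r w < r y"
  shows "dfs_rank V E (swap_blocks s p t \<circ> r)"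
  unfolding dfs_rank_def
proof (intro conjI ballI impI)
  let ?r' = "swap_blocks s p t \<circ> r"
  note less_iff = swap_blocks_less_iff[OF spt(1,2)]
  show "bij_betw ?r' V {1..card V}"
    by (rule bij_betw_trans[OF dfs_rank_bij[OF rank] bij_betw_swap_blocks[OF spt]])
  fix x y z assume xyz: "x \<in> V" "y \<in> V" "z \<in> V"
    and xy: "?r' x < ?r' y" and yz: "?r' y < ?r' z" and "E x z"
  (* Only pairs from the blocks B = {s<..p} and C = {p<..t} change their relative order. The edge
     hypotheses exclude every such pair from the triple x, y, z and from x, w, y, except for x
     before B and y in C, where C_attached supplies the witness. *)
  show "\<exists>w\<in>V. ?r' x \<le> ?r' w \<and> ?r' w < ?r' y \<and> E w y"
  proof (cases "r x \<le> s \<and> p < r y \<and> r y \<le> t")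
    case True
    then obtain w where w: "w \<in> V" "E w y" "r w = s \<or> p < r w" "r w < r y"
      using C_attached xyz(2) by blast
    then have "?r' x \<le> ?r' w" "?r' w < ?r' y"
      using True spt unfolding comp_apply not_less[symmetric] less_iff by auto
    then show ?thesis using w by blast
  next
    case False
    have "r x < r y \<and> r y < r z"
      using xy yz False B_sep[OF \<open>E x z\<close>] B_sep[OF sym[OF \<open>E x z\<close>]]
        C_sep[OF \<open>E x z\<close>] C_sep[OF sym[OF \<open>E x z\<close>]]
      unfolding comp_apply less_iff by linarith
    then obtain w where w: "w \<in> V" "r x \<le> r w" "r w < r y" "E w y"
      using dfs_rankD[OF rank xyz] \<open>E x z\<close> by blast
    have "?r' x \<le> ?r' w \<and> ?r' w < ?r' y"
      using xy w(2,3) B_sep[OF w(4)] C_sep[OF sym[OF w(4)]] C_sep[OF w(4)]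
      unfolding comp_apply not_less[symmetric] less_iff by linarith
    then show ?thesis using w by blast
  qed
qed

lemma dfs_rank_closed_block:
  assumes sg: "simple_graph V E" and rank: "dfs_rank V E r" and "s \<le> p" "p < card V"
    and first: "\<And>y. y \<in> V \<Longrightarrow> r y = p + 1 \<Longrightarrow> \<exists>w\<in>V. s \<le> r w \<and> r w < r y \<and> E w y"
  obtains t where "p < t" "t \<le> card V"
    "\<And>y. y \<in> V \<Longrightarrow> p < r y \<Longrightarrow> r y \<le> t \<Longrightarrow> \<exists>w\<in>V. s \<le> r w \<and> r w < r y \<and> E w y"
    "\<And>a b. E a b \<Longrightarrow> p < r a \<Longrightarrow> r a \<le> t \<Longrightarrow> r b \<le> t"
proof -
  define attached where "attached t \<longleftrightarrow> p < t \<and> t \<le> card V \<and>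
    (\<forall>y\<in>V. p < r y \<longrightarrow> r y \<le> t \<longrightarrow> (\<exists>w\<in>V. s \<le> r w \<and> r w < r y \<and> E w y))" for t
  have "attached (p + 1)" using first \<open>p < card V\<close> unfolding attached_def by force
  then obtain t where t: "attached t" and maximal: "\<And>t'. attached t' \<Longrightarrow> t' \<le> t"
    using ex_has_greatest_nat[of attached "p + 1" id "card V + 1"] unfolding attached_def by auto
  (* An edge leaving the block would, by the four-point condition, attach the vertex at t + 1. *)
  have closed: "r b \<le> t" if "E a b" "p < r a" "r a \<le> t" for a b
  proof (rule ccontr)
    assume "\<not> r b \<le> t"
    have ab: "a \<in> V" "b \<in> V" using sg \<open>E a b\<close> unfolding simple_graph_def by auto
    have "1 \<le> t + 1" "t + 1 \<le> card V" using dfs_rank_range[OF rank ab(2)] \<open>\<not> r b \<le> t\<close> by simp_all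
    then obtain y where y: "y \<in> V" "r y = t + 1" by (rule dfs_rank_vertex_of_rank[OF rank])
    have "r a < r y" "r y \<le> r b" using y(2) that(3) \<open>\<not> r b \<le> t\<close> by simp_all
    then obtain w where w: "w \<in> V" "r a \<le> r w" "r w < r y" "E w y"
      using dfs_rankD_le[OF rank ab(1) y(1) ab(2)] \<open>E a b\<close> by blast
    have "attached (t + 1)"
      unfolding attached_def
    proof (intro conjI ballI impI)
      show "p < t + 1" using t unfolding attached_def by simp
      show "t + 1 \<le> card V" using dfs_rank_range[OF rank y(1)] y(2) by simp
      fix y' assume y': "y' \<in> V" "p < r y'" "r y' \<le> t + 1"
      show "\<exists>w\<in>V. s \<le> r w \<and> r w < r y' \<and> E w y'"
      proof (cases "r y' = t + 1")
        case True
        then have "y' = y" using dfs_rank_inj[OF rank y'(1) y(1)] y(2) by simp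
        moreover have "s \<le> r w" using w(2) that(2) \<open>s \<le> p\<close> by simp
        ultimately show ?thesis using w by blast
      next
        case False
        then show ?thesis using t y' unfolding attached_def by auto
      qed
    qed
    then show False using maximal by fastforce
  qed
  show ?thesis using that t closed unfolding attached_def by blast
qed

lemma dfs_rank_block_decomposition:
  assumes sg: "simple_graph V E" and conn: "connected_graph V E" and rank: "dfs_rank V E r"
    and v: "v \<in> V" and no_later: "\<And>u. E v u \<Longrightarrow> r u < r v" and "r v < card V"
  obtains s t where "s < r v" "r v < t" "t \<le> card V"
    "\<And>a b. E a b \<Longrightarrow> s < r a \<Longrightarrow> r a \<le> r v \<Longrightarrow> r b \<le> r v"
    "\<And>a b. E a b \<Longrightarrow> r v < r a \<Longrightarrow> r a \<le> t \<Longrightarrow> r b \<le> t"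
    "\<And>y. y \<in> V \<Longrightarrow> r v < r y \<Longrightarrow> r y \<le> t \<Longrightarrow> \<exists>w\<in>V. E w y \<and> (r w = s \<or> r v < r w) \<and> r w < r y"
proof -
  have "1 \<le> r v + 1" "r v + 1 \<le> card V" using \<open>r v < card V\<close> by simp_all
  then obtain y where y: "y \<in> V" "r y = r v + 1" by (rule dfs_rank_vertex_of_rank[OF rank])
  have "1 < r y" using y(2) dfs_rank_range[OF rank v] by simp
  then obtain x where x: "x \<in> V" "E x y" "r x < r y"
    and latest: "\<And>u. u \<in> V \<Longrightarrow> E u y \<Longrightarrow> r u < r y \<Longrightarrow> r u \<le> r x"
    using dfs_rank_latest_earlier_neighbour[OF sg conn rank y(1)] by blast
  define s where "s = r x"
  have "x \<noteq> v" using no_later[of y] x(2) y(2) by auto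
  then have "r x \<noteq> r v" using dfs_rank_inj[OF rank x(1) v] by blast
  then have "s < r v" using x(3) y(2) unfolding s_def by simp
  have B_sep: "r b \<le> r v" if "E a b" "s < r a" "r a \<le> r v" for a b
    using dfs_rank_no_edge_across_parent[OF sg rank x(1) y(1) x(3) latest that(1)] that y
    unfolding s_def by auto
  have first: "\<exists>w\<in>V. s \<le> r w \<and> r w < r y' \<and> E w y'" if "y' \<in> V" "r y' = r v + 1" for y'
  proof -
    have "y' = y" using dfs_rank_inj[OF rank that(1) y(1)] that(2) y(2) by simp
    then show ?thesis using x unfolding s_def by auto
  qed
  have "s \<le> r v" "r v < card V" using \<open>s < r v\<close> \<open>r v < card V\<close> by simp_all
  then obtain t where t: "r v < t" "t \<le> card V"
    and attached: "\<And>y. y \<in> V \<Longrightarrow> r v < r y \<Longrightarrow> r y \<le> t \<Longrightarrow> \<exists>w\<in>V. s \<le> r w \<and> r w < r y \<and> E w y"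
    and C_sep: "\<And>a b. E a b \<Longrightarrow> r v < r a \<Longrightarrow> r a \<le> t \<Longrightarrow> r b \<le> t"
    using dfs_rank_closed_block[OF sg rank _ _ first] by blast
  have C_attached: "\<exists>w\<in>V. E w y' \<and> (r w = s \<or> r v < r w) \<and> r w < r y'"
    if y': "y' \<in> V" "r v < r y'" "r y' \<le> t" for y'
  proof -
    obtain w where w: "w \<in> V" "s \<le> r w" "r w < r y'" "E w y'" using attached[OF y'] by blast
    have "\<not> (s < r w \<and> r w \<le> r v)" using B_sep[OF w(4)] y'(2) by auto
    then show ?thesis using w by auto
  qed
  show ?thesis by (rule that[OF \<open>s < r v\<close> t B_sep C_sep C_attached])
qed

lemma dfs_rank_postpone:
  assumes sg: "simple_graph V E" and conn: "connected_graph V E" and rank: "dfs_rank V E r"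
    and v: "v \<in> V" and no_later: "\<And>u. E v u \<Longrightarrow> r u < r v" and "r v < card V"
  obtains r' where "dfs_rank V E r'" "r v < r' v" "\<And>u. E v u \<Longrightarrow> r' u < r' v"
proof -
  obtain s t where st: "s < r v" "r v < t" "t \<le> card V"
    and B_sep: "\<And>a b. E a b \<Longrightarrow> s < r a \<Longrightarrow> r a \<le> r v \<Longrightarrow> r b \<le> r v"
    and C_sep: "\<And>a b. E a b \<Longrightarrow> r v < r a \<Longrightarrow> r a \<le> t \<Longrightarrow> r b \<le> t"
    and C_attached: "\<And>y. y \<in> V \<Longrightarrow> r v < r y \<Longrightarrow> r y \<le> t \<Longrightarrow>
      \<exists>w\<in>V. E w y \<and> (r w = s \<or> r v < r w) \<and> r w < r y"
    using dfs_rank_block_decomposition[OF assms] by blast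
  have sym: "\<And>a b. E a b \<Longrightarrow> E b a" using sg unfolding simple_graph_def by blast
  let ?r' = "swap_blocks s (r v) t \<circ> r"
  have "dfs_rank V E ?r'"
    using dfs_rank_swap_blocks[OF rank sym _ _ st(3) B_sep C_sep C_attached] st by simp
  moreover have "?r' v = t" using st unfolding swap_blocks_def by simp
  moreover have "?r' u < ?r' v" if "E v u" for u
    using no_later[OF that] st swap_blocks_less_iff[of s "r v" t "r u" "r v"] by simp
  ultimately show ?thesis using that st(2) by simp
qed

lemma dfs_rank_move_to_end:
  assumes sg: "simple_graph V E" and conn: "connected_graph V E"
  shows "dfs_rank V E r \<Longrightarrow> v \<in> V \<Longrightarrow> (\<And>u. E v u \<Longrightarrow> r u < r v) \<Longrightarrow>
    \<exists>r'. dfs_rank V E r' \<and> r' v = card V"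
proof (induction "card V - r v" arbitrary: r rule: less_induct)
  case less
  show ?case
  proof (cases "r v = card V")
    case True
    then show ?thesis using less.prems by blast
  next
    case False
    then have "r v < card V" using dfs_rank_range[OF less.prems(1,2)] by simp
    then obtain r' where r': "dfs_rank V E r'" "r v < r' v" "\<And>u. E v u \<Longrightarrow> r' u < r' v"
      using dfs_rank_postpone[OF sg conn less.prems] by blast
    have "card V - r' v < card V - r v" using r'(2) dfs_rank_range[OF r'(1) less.prems(2)] by simp
    then show ?thesis using less.hyps r' less.prems(2) by blast
  qed
qed

lemma dfs_end_vertex_if_no_later_neighbour:
  assumes sg: "simple_graph V E" and conn: "connected_graph V E" and dfs: "dfs_ordering V E \<sigma>"
    and v: "v \<in> V" and no_later: "\<And>u. E v u \<Longrightarrow> pos V \<sigma> u < pos V \<sigma> v"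
  shows "\<exists>\<sigma>'. dfs_ordering V E \<sigma>' \<and> \<sigma>' (card V) = v"
proof -
  obtain r where r: "dfs_rank V E r" "r v = card V"
    using dfs_rank_move_to_end[OF sg conn dfs_rank_pos[OF dfs] v] no_later by blast
  have "inj_on r V" using dfs_rank_bij[OF r(1)] by (simp add: bij_betw_def)
  then have "inv_into V r (card V) = v" using inv_into_f_f[OF _ v] r(2) by metis
  then show ?thesis using dfs_ordering_inv_into[OF r(1)] by blast
qed

theorem theorem4:
  fixes V :: "'a set" and E :: "'a \<Rightarrow> 'a \<Rightarrow> bool" and v :: 'a
  assumes "simple_graph V E" and "connected_graph V E" and "card V \<ge> 2" and "v \<in> V"
  shows "(\<exists>\<sigma>. dfs_ordering V E \<sigma> \<and> L_branch_leaf V E \<sigma> v)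
     \<longleftrightarrow> (\<exists>\<sigma>. dfs_ordering V E \<sigma> \<and> \<sigma> (card V) = v)"
proof
  assume "\<exists>\<sigma>. dfs_ordering V E \<sigma> \<and> L_branch_leaf V E \<sigma> v"
  then obtain \<sigma> where dfs: "dfs_ordering V E \<sigma>" and leaf: "L_branch_leaf V E \<sigma> v" by blast
  have "\<And>u. E v u \<Longrightarrow> pos V \<sigma> u < pos V \<sigma> v"
    by (rule L_branch_leaf_no_later_neighbour[OF assms(1,2) dfs leaf])
  then show "\<exists>\<sigma>. dfs_ordering V E \<sigma> \<and> \<sigma> (card V) = v"
    by (rule dfs_end_vertex_if_no_later_neighbour[OF assms(1,2) dfs assms(4)])
next
  assume "\<exists>\<sigma>. dfs_ordering V E \<sigma> \<and> \<sigma> (card V) = v"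
  then obtain \<sigma> where dfs: "dfs_ordering V E \<sigma>" and last: "\<sigma> (card V) = v" by blast
  have "L_branch_leaf V E \<sigma> v"
    using last_vertex_L_branch_leaf[OF assms(1,2) dfs assms(3)] last by simp
  then show "\<exists>\<sigma>. dfs_ordering V E \<sigma> \<and> L_branch_leaf V E \<sigma> v" using dfs by blast
qed

end
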